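(* Let $r\in\mathbb{Q}_{>0}\setminus\mathbb{N}$ with $\mathsf{n}(r)>1$, and let $S_r=\langle r^n:n\in\mathbb{N}\rangle$. Then $\Delta(S_r)=\{|\mathsf{n}(r)-\mathsf{d}(r)|\}$.
   Context: $\mathbb{N}=\{0,1,2,\dots\}$. For $r\in\mathbb{Q}_{>0}$ write $r=\mathsf{n}(r)/\mathsf{d}(r)$ in lowest terms; $S_r$ is the additive submonoid of $\mathbb{Q}_{\ge0}$ generated by all nonnegative powers of $r$ (atomic under the stated hypotheses). For an atomic monoid $M$ and $x\in M$ with set of lengths $\mathsf{L}(x)$, a positive integer $d$ is a distance of $x$ if $\mathsf{L}(x)\cap\{l,\dots,l+d\}=\{l,l+d\}$ for some $l\in\mathsf{L}(x)$; $\Delta(M)$ is the union over $x\in M$ of the sets of distances of $x$. *)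

theory Defs
  imports Complex_Main
begin

definition num_of :: "rat \<Rightarrow> int" where "num_of r = fst (quotient_of r)"
definition den_of :: "rat \<Rightarrow> int" where "den_of r = snd (quotient_of r)"

definition S :: "rat \<Rightarrow> rat set" where
  "S r = {x. \<exists>(N::nat) (c::nat \<Rightarrow> nat). x = (\<Sum>i<N. of_nat (c i) * r ^ i)}"

definition units_of_mon :: "rat set \<Rightarrow> rat set" where
  "units_of_mon M = {u \<in> M. \<exists>v\<in>M. u + v = 0}"

definition atoms :: "rat set \<Rightarrow> rat set" where
  "atoms M = {a \<in> M. a \<notin> units_of_mon M \<and>
     (\<forall>u\<in>M. \<forall>v\<in>M. a = u + v \<longrightarrow> u \<in> units_of_mon M \<or> v \<in> units_of_mon M)}"

definition lengths :: "rat set \<Rightarrow> rat \<Rightarrow> nat set" where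
  "lengths M x = {length as | as. set as \<subseteq> atoms M \<and> sum_list as = x}"

definition distances :: "rat set \<Rightarrow> rat \<Rightarrow> nat set" where
  "distances M x = {d. d > 0 \<and> (\<exists>l \<in> lengths M x.
      lengths M x \<inter> {l..l+d} = {l, l+d})}"

definition Delta :: "rat set \<Rightarrow> nat set" where
  "Delta M = (\<Union>x\<in>M. distances M x)"

end

theory Submission
  imports Defs
begin

text \<open>Write \<open>r = p / q\<close> in lowest terms. The atoms of \<open>S r\<close> are the powers \<open>r ^ i\<close>, so a
  factorization is a multiplicity vector \<open>c\<close> with value \<open>\<Sum> c i * r ^ i\<close> and length
  \<open>\<Sum> c i\<close>. Clearing denominators in the relation between two factorizations of the same
  element shows that at the first index \<open>j\<close> where they differ, \<open>p\<close> divides the difference of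
  the coefficients. So \<open>p\<close> copies of \<open>r ^ j\<close> in one of them can be traded for \<open>q\<close> copies of
  \<open>r ^ (j + 1)\<close>: this keeps the value, changes the length by \<open>q - p\<close> and brings the two
  factorizations closer. By induction, any two lengths of an element are congruent modulo
  \<open>q - p\<close> and all lengths of that residue class in between occur; hence every distance is
  \<open>\<bar>q - p\<bar>\<close>, and it is attained at \<open>p = p * r ^ 0 = q * r ^ 1\<close>.\<close>

section \<open>Coefficient divisibility and joined lengths\<close>

lemma coprime_dvd_lowest_coeff:
  fixes a b :: int and e :: "nat \<Rightarrow> int"
  assumes "a \<noteq> 0" and "coprime a b" and "j < N" and below: "\<forall>k<j. e k = 0"
    and rel: "(\<Sum>k<N. e k * a ^ k * b ^ (N - Suc k)) = 0"
  shows "a dvd e j"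
proof -
  let ?t = "\<lambda>k. e k * a ^ k * b ^ (N - Suc k)"
  have "(\<Sum>k<N. ?t k) = ?t j + (\<Sum>k\<in>{..<N} - {j}. ?t k)"
    by (rule sum.remove) (use \<open>j < N\<close> in auto)
  with rel have tj: "?t j = - (\<Sum>k\<in>{..<N} - {j}. ?t k)" by linarith
  have "a ^ Suc j dvd (\<Sum>k\<in>{..<N} - {j}. ?t k)"
  proof (rule dvd_sum)
    fix k assume k: "k \<in> {..<N} - {j}"
    show "a ^ Suc j dvd ?t k"
    proof (cases "k < j")
      case False
      with k have "a ^ Suc j dvd a ^ k" by (intro le_imp_power_dvd) auto
      then show ?thesis by (simp add: dvd_mult dvd_mult2)
    qed (use below in simp)
  qed
  with tj have "a ^ j * a dvd a ^ j * (e j * b ^ (N - Suc j))"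
    by (simp add: ac_simps)
  then have "a dvd e j * b ^ (N - Suc j)" using \<open>a \<noteq> 0\<close> by simp
  then show ?thesis using \<open>coprime a b\<close> by (simp add: coprime_dvd_mult_left_iff)
qed

definition joined :: "int \<Rightarrow> int set \<Rightarrow> int \<Rightarrow> int \<Rightarrow> bool" where
  "joined k L x y \<longleftrightarrow> k dvd y - x \<and>
     (\<forall>l. min x y \<le> l \<and> l \<le> max x y \<and> k dvd l - x \<longrightarrow> l \<in> L)"

lemma joined_refl: "x \<in> L \<Longrightarrow> joined k L x x"
  by (auto simp: joined_def)

lemma joined_sym:
  assumes "joined k L x y"
  shows "joined k L y x"
proof -
  have "k dvd y - x" using assms by (simp add: joined_def)
  moreover have "k dvd l - x" if "k dvd l - y" for l
    using dvd_add[OF that \<open>k dvd y - x\<close>] by simp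
  ultimately show ?thesis using assms
    by (auto simp: joined_def min.commute max.commute dvd_diff_commute)
qed

lemma joined_extend:
  assumes "k \<noteq> 0" and "x \<in> L" and "joined k L (x + k) y"
  shows "joined k L x y"
  unfolding joined_def
proof (intro conjI allI impI)
  have "k dvd y - (x + k)" using assms(3) by (simp add: joined_def)
  from dvd_add[OF this dvd_refl] show "k dvd y - x" by simp
next
  fix l assume l: "min x y \<le> l \<and> l \<le> max x y \<and> k dvd l - x"
  show "l \<in> L"
  proof (cases "l = x")
    case False
    then have "\<bar>k\<bar> \<le> \<bar>l - x\<bar>" using l by (intro dvd_imp_le_int) auto
    then have "min (x + k) y \<le> l \<and> l \<le> max (x + k) y"
      using l by (auto simp: abs_if min_def max_def split: if_splits)
    moreover have "k dvd l - (x + k)" using l by (simp add: diff_diff_eq[symmetric])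
    ultimately show ?thesis using assms(3) by (simp add: joined_def)
  qed (use assms(2) in simp)
qed

lemma gap_length_if_joined:
  fixes L :: "nat set"
  assumes joined: "\<And>l l'. l \<in> L \<Longrightarrow> l' \<in> L \<Longrightarrow> joined k (int ` L) (int l) (int l')"
    and "d > 0" and "l \<in> L" and gap: "L \<inter> {l..l + d} = {l, l + d}"
  shows "d = nat \<bar>k\<bar>"
proof -
  have "l + d \<in> L" using gap by blast
  then have J: "joined k (int ` L) (int l) (int l + int d)"
    using joined[OF \<open>l \<in> L\<close>] by fastforce
  then have "k dvd int d" by (simp add: joined_def)
  then have "k \<noteq> 0" and "\<bar>k\<bar> \<le> int d" using \<open>d > 0\<close> dvd_imp_le_int[of "int d" k] by auto
  have "int (l + nat \<bar>k\<bar>) \<in> int ` L"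
    using J \<open>\<bar>k\<bar> \<le> int d\<close> by (simp add: joined_def)
  then have "l + nat \<bar>k\<bar> \<in> L" by (metis image_iff of_nat_eq_iff)
  then have "l + nat \<bar>k\<bar> \<in> L \<inter> {l..l + d}" using \<open>\<bar>k\<bar> \<le> int d\<close> by simp
  then have "l + nat \<bar>k\<bar> = l + d" using gap \<open>k \<noteq> 0\<close> by auto
  then show ?thesis by simp
qed

lemma gap_if_joined:
  fixes L :: "nat set"
  assumes joined: "\<And>l l'. l \<in> L \<Longrightarrow> l' \<in> L \<Longrightarrow> joined k (int ` L) (int l) (int l')"
    and "k \<noteq> 0" and "l \<in> L" and "l + nat \<bar>k\<bar> \<in> L"
  shows "L \<inter> {l..l + nat \<bar>k\<bar>} = {l, l + nat \<bar>k\<bar>}"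
proof (intro equalityI subsetI)
  fix m assume m: "m \<in> L \<inter> {l..l + nat \<bar>k\<bar>}"
  then have "k dvd int m - int l" using joined[OF \<open>l \<in> L\<close>] by (simp add: joined_def)
  then have "\<bar>k\<bar> dvd int m - int l" by simp
  then have "\<not> (0 < int m - int l \<and> int m - int l < \<bar>k\<bar>)" using zdvd_not_zless by blast
  then show "m \<in> {l, l + nat \<bar>k\<bar>}" using m by auto
qed (use assms in auto)

section \<open>The monoid generated by the powers of a rational\<close>

locale rational_base =
  fixes p q :: nat and r :: rat
  assumes p_ge_2: "2 \<le> p" and q_ge_2: "2 \<le> q" and coprime_pq: "coprime p q"
    and r_eq: "r = of_nat p / of_nat q"
begin

definition fval :: "nat \<Rightarrow> (nat \<Rightarrow> nat) \<Rightarrow> rat" where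
  "fval N c = (\<Sum>i<N. of_nat (c i) * r ^ i)"

definition flen :: "nat \<Rightarrow> (nat \<Rightarrow> nat) \<Rightarrow> nat" where
  "flen N c = (\<Sum>i<N. c i)"

definition flengths :: "rat \<Rightarrow> nat set" where
  "flengths x = {flen N c | N c. fval N c = x}"

definition trade_shift :: int where
  "trade_shift = int q - int p"

lemma flen_in_flengths: "flen N c \<in> flengths (fval N c)"
  unfolding flengths_def by blast

lemma r_pos: "r > 0"
  using p_ge_2 q_ge_2 by (simp add: r_eq)

lemma q_times_r: "of_nat q * r = of_nat p"
  using q_ge_2 by (simp add: r_eq)

lemma trade_shift_nonzero: "trade_shift \<noteq> 0"
proof
  assume "trade_shift = 0"
  then have "coprime p p" using coprime_pq by (simp add: trade_shift_def)
  then show False using p_ge_2 by simp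
qed

lemma fval_add: "fval N (\<lambda>i. c i + d i) = fval N c + fval N d"
  by (simp add: fval_def sum.distrib algebra_simps)

lemma flen_add: "flen N (\<lambda>i. c i + d i) = flen N c + flen N d"
  by (simp add: flen_def sum.distrib)

lemma fval_single: "fval N (\<lambda>i. if i = j then m else 0) = (if j < N then of_nat m * r ^ j else 0)"
  unfolding fval_def by (simp add: if_distrib[of "\<lambda>x. of_nat x * _"] cong: if_cong)

lemma flen_single: "flen N (\<lambda>i. if i = j then m else 0) = (if j < N then m else 0)"
  unfolding flen_def by simp

lemma fval_Suc: "fval (Suc N) c = fval N c + of_nat (c N) * r ^ N"
  by (simp add: fval_def)

lemma fval_nonneg: "fval N c \<ge> 0"
  unfolding fval_def using r_pos by (intro sum_nonneg) simp

lemma fval_pos: assumes "flen N c > 0" shows "fval N c > 0"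
proof -
  from assms obtain i where "i < N" "c i > 0"
    unfolding flen_def by (metis lessThan_iff not_gr_zero sum_eq_0_iff finite_lessThan)
  then show ?thesis unfolding fval_def using r_pos by (intro sum_pos2[of _ i]) auto
qed

lemma fval_eq_0_iff: "fval N c = 0 \<longleftrightarrow> flen N c = 0"
proof
  assume "fval N c = 0"
  then show "flen N c = 0" using fval_pos[of N c] by auto
qed (simp add: fval_def flen_def)

lemma exists_rep_with_bound:
  assumes "N \<le> M"
  obtains c' where "fval M c' = fval N c" and "flen M c' = flen N c"
proof
  let ?c' = "\<lambda>i. if i < N then c i else 0"
  show "fval M ?c' = fval N c" unfolding fval_def
    by (rule sum.mono_neutral_cong_right) (use assms in auto)
  show "flen M ?c' = flen N c" unfolding flen_def
    by (rule sum.mono_neutral_cong_right) (use assms in auto)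
qed

lemma clear_denominators:
  fixes e :: "nat \<Rightarrow> int"
  assumes "(\<Sum>k<N. of_int (e k) * r ^ k) = 0"
  shows "(\<Sum>k<N. e k * int p ^ k * int q ^ (N - Suc k)) = 0"
proof -
  have "of_int (\<Sum>k<N. e k * int p ^ k * int q ^ (N - Suc k))
      = (of_nat q ^ (N - 1) :: rat) * (\<Sum>k<N. of_int (e k) * r ^ k)"
    unfolding of_int_sum sum_distrib_left
  proof (rule sum.cong)
    fix k assume "k \<in> {..<N}"
    then have "(of_nat q ^ (N - 1) :: rat) = of_nat q ^ k * of_nat q ^ (N - Suc k)"
      by (simp add: power_add[symmetric])
    then show "of_int (e k * int p ^ k * int q ^ (N - Suc k))
        = (of_nat q ^ (N - 1) :: rat) * (of_int (e k) * r ^ k)"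
      using q_ge_2 by (simp add: r_eq power_divide field_simps)
  qed simp
  then show ?thesis using assms by (metis mult_zero_right of_int_eq_0_iff)
qed

lemma dvd_lowest_coeff:
  fixes e :: "nat \<Rightarrow> int"
  assumes "(\<Sum>k<N. of_int (e k) * r ^ k) = 0" and "j < N" and "\<forall>k<j. e k = 0"
  shows "int p dvd e j"
  using coprime_dvd_lowest_coeff[OF _ _ assms(2,3) clear_denominators[OF assms(1)]]
    p_ge_2 coprime_pq by simp

lemma dvd_highest_coeff:
  fixes e :: "nat \<Rightarrow> int"
  assumes "(\<Sum>k<N. of_int (e k) * r ^ k) = 0" and "j < N" and "\<forall>k. j < k \<and> k < N \<longrightarrow> e k = 0"
  shows "int q dvd e j"
proof -
  let ?e = "\<lambda>k. e (N - Suc k)"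
  have "(\<Sum>k<N. ?e k * int q ^ k * int p ^ (N - Suc k))
      = (\<Sum>k<N. e k * int p ^ k * int q ^ (N - Suc k))"
    by (subst sum.nat_diff_reindex[symmetric]) (auto intro!: sum.cong simp: Suc_diff_Suc)
  also have "\<dots> = 0" by (rule clear_denominators[OF assms(1)])
  finally have "int q dvd ?e (N - Suc j)"
    using q_ge_2 coprime_pq assms(2,3)
    by (intro coprime_dvd_lowest_coeff) (auto simp: coprime_commute)
  then show ?thesis using assms(2) by (simp add: Suc_diff_Suc)
qed

lemma remove_atom:
  assumes "0 < c k" and "k < N"
  obtains c' where "fval N c = fval N c' + r ^ k" and "flen N c = flen N c' + 1"
proof
  define c' where "c' = c(k := c k - 1)"
  have c: "c = (\<lambda>i. c' i + (if i = k then 1 else 0))"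
    using assms(1) by (auto simp: c'_def)
  show "fval N c = fval N c' + r ^ k"
    by (subst c) (simp only: fval_add fval_single, use assms(2) in simp)
  show "flen N c = flen N c' + 1"
    by (subst c) (simp only: flen_add flen_single, use assms(2) in simp)
qed

lemma fval_gt_power:
  assumes "0 < c k" and "k < N" and "2 \<le> flen N c"
  shows "r ^ k < fval N c"
proof -
  obtain c' where "fval N c = fval N c' + r ^ k" and "flen N c = flen N c' + 1"
    using remove_atom[of c k N, OF assms(1,2)] .
  then show ?thesis using fval_pos[of N c'] assms(3) by simp
qed

text \<open>If \<open>r < 1\<close>, a factorization of \<open>r ^ i\<close> only uses atoms \<open>r ^ k\<close> with \<open>k > i\<close>, and
  then \<open>p\<close> would divide the coefficient \<open>1\<close> of \<open>r ^ i\<close> in the resulting relation; if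
  \<open>r > 1\<close>, symmetrically \<open>q\<close> would.\<close>

lemma flen_le_1_if_fval_power:
  assumes "i < N" and val: "fval N c = r ^ i"
  shows "flen N c \<le> 1"
proof (rule ccontr)
  assume "\<not> flen N c \<le> 1"
  then have long: "2 \<le> flen N c" by simp
  define e where "e k = (if k = i then 1 else 0) - int (c k)" for k
  have "(\<Sum>k<N. of_int (e k) * r ^ k) = (\<Sum>k<N. (if k = i then r ^ i else 0) - of_nat (c k) * r ^ k)"
    by (rule sum.cong) (auto simp: e_def algebra_simps)
  also have "\<dots> = 0" using assms by (simp add: sum_subtractf fval_def)
  finally have rel: "(\<Sum>k<N. of_int (e k) * r ^ k) = 0" .
  show False
  proof (cases "p < q")
    case True
    then have "r \<le> 1" using q_ge_2 by (simp add: r_eq)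
    show False
    proof (cases "\<exists>k\<le>i. 0 < c k")
      case True
      then obtain k where "k \<le> i" "0 < c k" by auto
      then have "r ^ k < r ^ i" using fval_gt_power[of c k N] assms long by simp
      moreover have "r ^ i \<le> r ^ k" using power_decreasing[OF \<open>k \<le> i\<close>, of r] \<open>r \<le> 1\<close> r_pos by simp
      ultimately show False by simp
    next
      case False
      then have "int p dvd e i" using \<open>i < N\<close> by (intro dvd_lowest_coeff[OF rel]) (auto simp: e_def)
      then show False using False p_ge_2 by (simp add: e_def)
    qed
  next
    case False
    then have "1 \<le> r" using q_ge_2 by (simp add: r_eq)
    show False
    proof (cases "\<exists>k. i \<le> k \<and> k < N \<and> 0 < c k")
      case True
      then obtain k where "i \<le> k" "k < N" "0 < c k" by auto
      then have "r ^ k < r ^ i" using fval_gt_power[of c k N] assms long by simp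
      moreover have "r ^ i \<le> r ^ k" using power_increasing[OF \<open>i \<le> k\<close> \<open>1 \<le> r\<close>] by simp
      ultimately show False by simp
    next
      case False
      then have "int q dvd e i" using \<open>i < N\<close> by (intro dvd_highest_coeff[OF rel]) (auto simp: e_def)
      then show False using False \<open>i < N\<close> q_ge_2 by (simp add: e_def)
    qed
  qed
qed

lemma flen_eq_1_if_fval_power:
  assumes "fval N c = r ^ i"
  shows "flen N c = 1"
proof -
  obtain c' where c': "fval (max N (Suc i)) c' = fval N c" "flen (max N (Suc i)) c' = flen N c"
    using exists_rep_with_bound[of N "max N (Suc i)"] by auto
  have "flen N c \<le> 1" using flen_le_1_if_fval_power[of i "max N (Suc i)" c'] c' assms by simp
  moreover have "flen N c \<noteq> 0" using assms r_pos fval_eq_0_iff[of N c] by auto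
  ultimately show ?thesis by simp
qed

lemma S_eq: "S r = {fval N c | N c. True}"
  unfolding S_def fval_def by auto

lemma fval_in_S: "fval N c \<in> S r"
  unfolding S_eq by blast

lemma power_in_S: "r ^ i \<in> S r"
proof -
  have "fval (Suc i) (\<lambda>k. if k = i then 1 else 0) = r ^ i" by (simp add: fval_single)
  then show ?thesis using fval_in_S by metis
qed

lemma units_S: "units_of_mon (S r) = {0}"
proof -
  have "0 \<in> S r" using fval_in_S[of 0] by (simp add: fval_def)
  moreover have "u \<ge> 0" if "u \<in> S r" for u using that fval_nonneg by (auto simp: S_eq)
  ultimately show ?thesis unfolding units_of_mon_def
    by (auto intro!: bexI[of _ 0]) (metis add_nonneg_eq_0_iff)
qed

lemma atoms_S: "atoms (S r) = range (\<lambda>i. r ^ i)"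
proof (intro equalityI subsetI)
  fix a assume "a \<in> atoms (S r)"
  then have "a \<in> S r" and "a \<noteq> 0"
    and irreducible: "\<And>u v. u \<in> S r \<Longrightarrow> v \<in> S r \<Longrightarrow> a = u + v \<Longrightarrow> u = 0 \<or> v = 0"
    by (auto simp: atoms_def units_S)
  then obtain N c where a: "a = fval N c" by (auto simp: S_eq)
  then have "flen N c \<noteq> 0" using \<open>a \<noteq> 0\<close> fval_eq_0_iff by simp
  then obtain k where "k < N" "0 < c k"
    unfolding flen_def by (metis lessThan_iff not_gr_zero sum_eq_0_iff finite_lessThan)
  then obtain c' where "a = fval N c' + r ^ k" using a remove_atom by metis
  moreover have "fval N c' = 0"
    using irreducible[OF fval_in_S power_in_S calculation] r_pos by simp
  ultimately show "a \<in> range (\<lambda>i. r ^ i)" by simp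
next
  fix a assume "a \<in> range (\<lambda>i. r ^ i)"
  then obtain i where a: "a = r ^ i" by auto
  have "u = 0 \<or> v = 0" if "u \<in> S r" "v \<in> S r" "r ^ i = u + v" for u v
  proof -
    obtain N1 c1 N2 c2 where u: "u = fval N1 c1" and v: "v = fval N2 c2"
      using \<open>u \<in> S r\<close> \<open>v \<in> S r\<close> by (auto simp: S_eq)
    obtain d1 d2 where d1: "fval (N1 + N2) d1 = u" "flen (N1 + N2) d1 = flen N1 c1"
      and d2: "fval (N1 + N2) d2 = v" "flen (N1 + N2) d2 = flen N2 c2"
      using exists_rep_with_bound[of N1 "N1 + N2" c1] exists_rep_with_bound[of N2 "N1 + N2" c2] u v
      by (metis le_add1 le_add2)
    have "fval (N1 + N2) (\<lambda>k. d1 k + d2 k) = r ^ i" using d1 d2 that(3) by (simp add: fval_add)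
    then have "flen N1 c1 + flen N2 c2 = 1"
      using flen_eq_1_if_fval_power d1 d2 by (metis flen_add)
    then show ?thesis using u v fval_eq_0_iff by auto
  qed
  then show "a \<in> atoms (S r)" unfolding atoms_def units_S using a power_in_S r_pos by simp
qed

lemma exists_rep_of_list:
  assumes "set as \<subseteq> range (\<lambda>i. r ^ i)"
  shows "\<exists>N c. flen N c = length as \<and> fval N c = sum_list as"
  using assms
proof (induction as)
  case Nil
  show ?case by (intro exI[of _ 0]) (simp add: flen_def fval_def)
next
  case (Cons a as)
  then obtain N c where c: "flen N c = length as" "fval N c = sum_list as" by auto
  obtain j where a: "a = r ^ j" using Cons.prems by auto
  obtain c' where c': "fval (max N (Suc j)) c' = fval N c" "flen (max N (Suc j)) c' = flen N c"
    using exists_rep_with_bound[of N "max N (Suc j)"] by auto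
  let ?c = "\<lambda>i. c' i + (if i = j then 1 else 0)"
  have "flen (max N (Suc j)) ?c = length (a # as)" "fval (max N (Suc j)) ?c = sum_list (a # as)"
    using c c' a by (simp_all add: flen_add flen_single fval_add fval_single add.commute less_max_iff_disj)
  then show ?case by blast
qed

lemma exists_list_of_rep:
  "\<exists>as. set as \<subseteq> range (\<lambda>i. r ^ i) \<and> length as = flen N c \<and> sum_list as = fval N c"
proof (induction N)
  case 0
  show ?case by (intro exI[of _ "[]"]) (simp add: flen_def fval_def)
next
  case (Suc N)
  then obtain as where "set as \<subseteq> range (\<lambda>i. r ^ i)" "length as = flen N c" "sum_list as = fval N c"
    by auto
  then show ?case
    by (intro exI[of _ "as @ replicate (c N) (r ^ N)"]) (auto simp: flen_def fval_def sum_list_replicate)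
qed

lemma lengths_S: "lengths (S r) x = flengths x"
proof (intro equalityI subsetI)
  fix l assume "l \<in> lengths (S r) x"
  then obtain as where "l = length as" "set as \<subseteq> range (\<lambda>i. r ^ i)" "sum_list as = x"
    unfolding lengths_def atoms_S by blast
  moreover obtain N c where "flen N c = length as" "fval N c = sum_list as"
    using exists_rep_of_list[OF \<open>set as \<subseteq> _\<close>] by blast
  ultimately show "l \<in> flengths x" unfolding flengths_def by (auto intro!: exI[of _ N] exI[of _ c])
next
  fix l assume "l \<in> flengths x"
  then obtain N c where "l = flen N c" "fval N c = x" unfolding flengths_def by blast
  moreover obtain as where "set as \<subseteq> range (\<lambda>i. r ^ i)" "length as = flen N c" "sum_list as = fval N c"
    using exists_list_of_rep by blast
  ultimately show "l \<in> lengths (S r) x" unfolding lengths_def atoms_S by (auto intro!: exI[of _ as])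
qed

section \<open>Trading atoms\<close>

definition trade :: "nat \<Rightarrow> (nat \<Rightarrow> nat) \<Rightarrow> nat \<Rightarrow> nat" where
  "trade j c = (c(j := c j - p))(Suc j := c (Suc j) + q)"

lemma fval_trade:
  assumes "p \<le> c j"
  shows "fval M (trade j c) = (if M = Suc j then fval M c - of_nat p * r ^ j else fval M c)"
proof -
  define c0 where "c0 = c(j := c j - p)"
  have c: "c = (\<lambda>i. c0 i + (if i = j then p else 0))"
    and t: "trade j c = (\<lambda>i. c0 i + (if i = Suc j then q else 0))"
    using assms by (auto simp: c0_def trade_def)
  have "of_nat q * r ^ Suc j = of_nat p * r ^ j"
    using q_times_r by (simp add: mult.assoc[symmetric])
  then have "fval M (trade j c) = fval M c0 + (if Suc j < M then of_nat p * r ^ j else 0)"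
    by (subst t) (simp only: fval_add fval_single)
  moreover have "fval M c = fval M c0 + (if j < M then of_nat p * r ^ j else 0)"
    by (subst c) (simp only: fval_add fval_single)
  ultimately show ?thesis by auto
qed

lemma flen_trade:
  assumes "p \<le> c j" and "Suc j < M"
  shows "int (flen M (trade j c)) = int (flen M c) + trade_shift"
proof -
  define c0 where "c0 = c(j := c j - p)"
  have c: "c = (\<lambda>i. c0 i + (if i = j then p else 0))"
    and t: "trade j c = (\<lambda>i. c0 i + (if i = Suc j then q else 0))"
    using assms by (auto simp: c0_def trade_def)
  have "flen M (trade j c) = flen M c0 + q" and "flen M c = flen M c0 + p"
    by (subst t c, simp only: flen_add flen_single, use assms(2) in simp)+
  then show ?thesis by (simp add: trade_shift_def)
qed

lemma fval_diff_at_first_difference: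
  assumes "\<forall>i<j. c i = d i"
  shows "fval (Suc j) c - fval (Suc j) d = (of_nat (c j) - of_nat (d j)) * r ^ j"
proof -
  have "fval j c = fval j d" unfolding fval_def by (rule sum.cong) (use assms in auto)
  then show ?thesis by (simp add: fval_Suc algebra_simps)
qed

lemma trade_applicable_at_first_difference:
  assumes val: "fval N c = fval N d" and agree: "\<forall>i<j. c i = d i" and "j < N" and "d j < c j"
  shows "d j + p \<le> c j" and "Suc j < N"
proof -
  define e where "e i = int (c i) - int (d i)" for i
  have "(\<Sum>i<N. of_int (e i) * r ^ i) = fval N c - fval N d"
    by (simp add: e_def fval_def sum_subtractf algebra_simps)
  then have "int p dvd e j"
    using val agree \<open>j < N\<close> by (intro dvd_lowest_coeff) (auto simp: e_def)
  moreover have "0 < e j" using \<open>d j < c j\<close> by (simp add: e_def)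
  ultimately have "int p \<le> e j" by (simp add: zdvd_imp_le)
  then show "d j + p \<le> c j" by (simp add: e_def)
  show "Suc j < N"
  proof (rule ccontr)
    assume "\<not> Suc j < N"
    then have "N = Suc j" using \<open>j < N\<close> by simp
    then have "(of_nat (c j) - of_nat (d j)) * r ^ j = 0"
      using fval_diff_at_first_difference[OF agree] val by simp
    then show False using \<open>d j < c j\<close> r_pos by simp
  qed
qed

text \<open>The induction measure: a trade at the first difference lowers the \<open>j\<close>-th summand by
  exactly \<open>p\<close> and leaves the others unchanged.\<close>

definition discrepancy :: "nat \<Rightarrow> (nat \<Rightarrow> nat) \<Rightarrow> (nat \<Rightarrow> nat) \<Rightarrow> rat" where
  "discrepancy N c d = (\<Sum>i<N. \<bar>fval (Suc i) c - fval (Suc i) d\<bar> / r ^ i)"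

lemma discrepancy_nonneg: "0 \<le> discrepancy N c d"
  unfolding discrepancy_def using r_pos by (intro sum_nonneg) simp

lemma discrepancy_sym: "discrepancy N c d = discrepancy N d c"
  unfolding discrepancy_def by (simp add: abs_minus_commute)

lemma discrepancy_trade:
  assumes agree: "\<forall>i<j. c i = d i" and "j < N" and "d j + p \<le> c j"
  shows "discrepancy N (trade j c) d = discrepancy N c d - of_nat p"
proof -
  have summand: "\<bar>fval (Suc i) (trade j c) - fval (Suc i) d\<bar> / r ^ i
      = \<bar>fval (Suc i) c - fval (Suc i) d\<bar> / r ^ i - (if i = j then of_nat p else 0)" for i
  proof (cases "i = j")
    case True
    have diff: "fval (Suc i) c - fval (Suc i) d = (of_nat (c j) - of_nat (d j)) * r ^ j"
      using fval_diff_at_first_difference[OF agree] True by simp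
    moreover have "fval (Suc i) (trade j c) - fval (Suc i) d
        = (of_nat (c j) - of_nat (d j) - of_nat p) * r ^ j"
      using diff fval_trade[of c j] assms(3) True by (simp add: algebra_simps)
    moreover have "of_nat p \<le> (of_nat (c j) - of_nat (d j) :: rat)" using assms(3) by simp
    ultimately show ?thesis using True r_pos by (simp add: abs_mult)
  qed (use fval_trade[of c j] assms(3) in simp)
  show ?thesis
    unfolding discrepancy_def by (simp only: summand sum_subtractf) (use \<open>j < N\<close> in simp)
qed

lemma trade_at_first_difference:
  assumes "fval N c = fval N d" and agree: "\<forall>i<j. c i = d i" and "j < N" and "d j < c j"
  obtains c' where "fval N c' = fval N c" and "int (flen N c') = int (flen N c) + trade_shift"
    and "discrepancy N c' d = discrepancy N c d - of_nat p"
proof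
  have bounds: "d j + p \<le> c j" "Suc j < N"
    using trade_applicable_at_first_difference[OF assms] by auto
  show "fval N (trade j c) = fval N c" using fval_trade[of c j N] bounds by simp
  show "int (flen N (trade j c)) = int (flen N c) + trade_shift" using flen_trade bounds by simp
  show "discrepancy N (trade j c) d = discrepancy N c d - of_nat p"
    using discrepancy_trade[OF agree \<open>j < N\<close> bounds(1)] .
qed

lemma joined_flen_if_fval_eq:
  assumes "fval N c = fval N d"
  shows "joined trade_shift (int ` flengths (fval N c)) (flen N c) (flen N d)"
  using assms
proof (induction "nat \<lceil>discrepancy N c d\<rceil>" arbitrary: c d rule: less_induct)
  case less
  show ?case
  proof (cases "\<forall>i<N. c i = d i")
    case True
    then have "flen N c = flen N d" unfolding flen_def by (intro sum.cong) auto
    then show ?thesis using flen_in_flengths[of N c] by (simp add: joined_refl)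
  next
    case False
    then obtain j where "j < N" "c j \<noteq> d j" and least: "\<forall>i<j. \<not> (i < N \<and> c i \<noteq> d i)"
      using exists_least_iff[of "\<lambda>j. j < N \<and> c j \<noteq> d j"] by auto
    then have agree: "\<forall>i<j. c i = d i" by auto
    have traded: "joined trade_shift (int ` flengths (fval N c')) (flen N c') (flen N d')"
      if val: "fval N c' = fval N d'" and disc: "discrepancy N c' d' = discrepancy N c d"
        and agree': "\<forall>i<j. c' i = d' i" and "d' j < c' j" for c' d'
    proof -
      obtain c'' where c'': "fval N c'' = fval N c'"
        "int (flen N c'') = int (flen N c') + trade_shift"
        "discrepancy N c'' d' = discrepancy N c d - of_nat p"
        using trade_at_first_difference[OF val agree' \<open>j < N\<close> \<open>d' j < c' j\<close>] disc by metis
      have "\<lceil>discrepancy N c d - of_nat p\<rceil> = \<lceil>discrepancy N c d\<rceil> - int p"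
        by (metis ceiling_diff_of_int of_int_of_nat_eq)
      then have "nat \<lceil>discrepancy N c'' d'\<rceil> < nat \<lceil>discrepancy N c d\<rceil>"
        using c''(3) discrepancy_nonneg[of N c'' d'] p_ge_2 by simp
      then have "joined trade_shift (int ` flengths (fval N c')) (flen N c'') (flen N d')"
        using less.hyps[of c'' d'] c''(1) val by simp
      then show ?thesis
        using c''(2) joined_extend[OF trade_shift_nonzero] flen_in_flengths by simp
    qed
    show ?thesis
    proof (cases "d j < c j")
      case True
      then show ?thesis using traded[of c d] less.prems agree by simp
    next
      case False
      then have "joined trade_shift (int ` flengths (fval N d)) (flen N d) (flen N c)"
        using traded[of d c] \<open>c j \<noteq> d j\<close> less.prems agree discrepancy_sym[of N d c] by simp
      then show ?thesis using less.prems by (simp add: joined_sym)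
    qed
  qed
qed

lemma joined_flengths:
  assumes "l \<in> flengths x" and "l' \<in> flengths x"
  shows "joined trade_shift (int ` flengths x) (int l) (int l')"
proof -
  obtain N c N' c' where l: "l = flen N c" "fval N c = x" and l': "l' = flen N' c'" "fval N' c' = x"
    using assms unfolding flengths_def by blast
  obtain d d' where "fval (N + N') d = x" "flen (N + N') d = l"
    and "fval (N + N') d' = x" "flen (N + N') d' = l'"
    using exists_rep_with_bound[of N "N + N'" c] exists_rep_with_bound[of N' "N + N'" c'] l l'
    by (metis le_add1 le_add2)
  then show ?thesis using joined_flen_if_fval_eq[of "N + N'" d d'] by simp
qed

lemma Delta_S: "Delta (S r) = {nat \<bar>trade_shift\<bar>}"
proof (intro equalityI subsetI)
  fix k assume "k \<in> Delta (S r)"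
  then obtain x l where "0 < k" "l \<in> flengths x" "flengths x \<inter> {l..l + k} = {l, l + k}"
    unfolding Delta_def distances_def lengths_S by blast
  then show "k \<in> {nat \<bar>trade_shift\<bar>}" using gap_length_if_joined[OF joined_flengths] by simp
next
  fix k assume "k \<in> {nat \<bar>trade_shift\<bar>}"
  then have k: "k = nat \<bar>trade_shift\<bar>" by simp
  have "fval 1 (\<lambda>_. p) = of_nat p" "flen 1 (\<lambda>_. p) = p"
    by (simp_all add: fval_def flen_def)
  then have "p \<in> flengths (of_nat p)" and "of_nat p \<in> S r"
    using flen_in_flengths[of 1 "\<lambda>_. p"] fval_in_S[of 1 "\<lambda>_. p"] by simp_all
  have "fval 2 (\<lambda>i. if i = 1 then q else 0) = of_nat p" "flen 2 (\<lambda>i. if i = 1 then q else 0) = q"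
    by (simp_all add: fval_single flen_single q_times_r)
  then have "q \<in> flengths (of_nat p)" using flen_in_flengths[of 2] by metis
  let ?l = "min p q"
  have "?l + k = max p q" by (simp add: k trade_shift_def)
  then have "?l \<in> flengths (of_nat p)" "?l + k \<in> flengths (of_nat p)"
    using \<open>p \<in> _\<close> \<open>q \<in> _\<close> by (simp_all add: min_def max_def)
  then have "flengths (of_nat p) \<inter> {?l..?l + k} = {?l, ?l + k}"
    unfolding k using gap_if_joined[OF joined_flengths trade_shift_nonzero] by blast
  then have "k \<in> distances (S r) (of_nat p)"
    unfolding distances_def lengths_S using \<open>?l \<in> _\<close> trade_shift_nonzero k by auto
  then show "k \<in> Delta (S r)" unfolding Delta_def using \<open>of_nat p \<in> S r\<close> by blast
qed

end

theorem mainTheorem10: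
  fixes r :: rat
  assumes "r > 0" and "r \<notin> \<nat>" and "num_of r > 1"
  shows "Delta (S r) = {nat \<bar>num_of r - den_of r\<bar>}"
proof -
  obtain a b where "quotient_of r = (a, b)" by fastforce
  then have "num_of r = a" "den_of r = b" "0 < b" "coprime a b" "r = of_int a / of_int b"
    by (auto simp: num_of_def den_of_def quotient_of_denom_pos quotient_of_coprime quotient_of_div)
  moreover have "b \<noteq> 1"
    using assms(2,3) calculation by (auto simp: Nats_def intro: range_eqI[of _ _ "nat a"])
  ultimately interpret rational_base "nat a" "nat b" r
    using assms(3) by unfold_locales (auto simp: coprime_int_iff[symmetric])
  show ?thesis
    using Delta_S \<open>num_of r = a\<close> \<open>den_of r = b\<close> \<open>0 < b\<close> assms(3)
    by (simp add: trade_shift_def abs_minus_commute)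
qed

end
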